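(* Fix a labeling $P$. Let $c$ be a command, $\rho,\mu$ states and $\beta$ a boolean such that $|a|_\mu>0$ for every array $a$, $\mathtt b\notin\mathrm{UsedVars}(c)$, and $\rho(\mathtt b)=\mathrm{nat}(\beta)$. If $\langle\mathrm{FiSLH}_P(c),\rho,\mu,\beta\rangle\xrightarrow[D]{O}{}^*\langle c',\rho',\mu',\beta'\rangle$ in the speculative semantics, then there exists $c''$ such that $\langle c,\rho,\mu,\beta\rangle\xrightarrow[D]{O}{}_i^*\langle c'',\rho'[\mathtt b\mapsto\rho(\mathtt b)],\mu',\beta'\rangle$ in the ideal semantics (w.r.t. $P$), and moreover if $c'=\mathtt{skip}$ then $c''=\mathtt{skip}$ and $\rho'(\mathtt b)=\mathrm{nat}(\beta')$.
   Context: Language AWhile: scalar variables $X\in\mathcal V$, arrays $a\in\mathcal A$; $e::=n\mid X\mid\mathrm{op}_{\mathbb N}(e,\dots,e)\mid be\,?\,e_1:e_2$; $be::=\mathtt{true}\mid\mathtt{false}\mid\mathrm{cmp}(e,e)\mid\mathrm{op}_{\mathbb B}(be,\dots,be)$; $c::=\mathtt{skip}\mid X:=e\mid c_1;c_2\mid\mathtt{if}\ be\ \mathtt{then}\ c_1\ \mathtt{else}\ c_2\mid\mathtt{while}\ be\ \mathtt{do}\ c\mid X\leftarrow a[e]\mid a[e]\leftarrow e'$. Scalar state $\rho:\mathcal V\to\mathbb N$; array state $\mu$ with sizes $|a|_\mu$ and values $\mu(a)[i]$; $[\![\cdot]\!]_\rho$ pure evaluation; $\mathrm{nat}(\mathtt{true})=1$,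 $\mathrm{nat}(\mathtt{false})=0$; $\mathrm{UsedVars}(c)$ is the set of scalar variables in $c$; $\mathtt b$ is a reserved scalar variable. Speculative semantics: configurations $\langle c,\rho,\mu,\beta\rangle$; steps labelled by optional observation ($\mathrm{branch}(v)$, $\mathrm{read}(a,i)$, $\mathrm{write}(a,i)$) and optional directive ($\mathit{step},\mathit{force},\mathrm{load}(a',j),\mathrm{store}(a',j)$). $X:=e\to\mathtt{skip}$ with $\rho[X\mapsto[\![e]\!]_\rho]$; $c_1;c_2\to c_1';c_2$ whenever $c_1\to c_1'$ (same labels); $\mathtt{skip};c\to c$; $\mathtt{while}\ be\ \mathtt{do}\ c\to\mathtt{if}\ be\ \mathtt{then}\ (c;\mathtt{while}\ be\ \mathtt{do}\ c)\ \mathtt{else}\ \mathtt{skip}$ (no obs/directive, flag kept). Conditional with $\mathit{step}$: go to branch $v=[\![be]\!]_\rho$; with $\mathit{force}$: go to branch $\neg v$, set $\beta:=\mathtt{true}$; obs $\mathrm{branch}(v)$. Read $X\leftarrow a[ie]$ with $\mathit{step}$: $i=[\![ie]\!]_\rho<|a|_\mu$, $X:=\mu(a)[i]$; with $\mathrm{load}(a',j)$: requires $\beta=\mathtt{true}$, $i\ge|a|_\mu$, $j<|a'|_\mu$, $X:=\mu(a')[j]$; obs $\mathrm{read}(a,i)$. Write $a[ie]\leftarrow ae$ with $\mathit{step}$: $i<|a|_\mu$, $\mu[a[i]\mapsto[\![ae]\!]_\rho]$; with $\mathrm{store}(a',j)$: requires $\beta=\mathtt{true}$, $i\ge|a|_\mu$,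 $j<|a'|_\mu$, $\mu[a'[j]\mapsto[\![ae]\!]_\rho]$; obs $\mathrm{write}(a,i)$. Multi-step $\xrightarrow[D]{O}{}^*$ collects directive list $D$ and observation list $O$. Labels: $\mathtt{true}$=public, $\mathtt{false}$=secret; $P(e)$, $P(be)$ public iff all variables in it are public under $P:\mathcal V\to$ labels. Ideal semantics (w.r.t. $P$), $\xrightarrow[d]{o}{}_i$: identical to the speculative semantics except: conditional rules (both $\mathit{step}$ and $\mathit{force}$) use $v=(P(be)\vee\neg\beta)\wedge[\![be]\!]_\rho$ in place of $[\![be]\!]_\rho$ (both for the chosen branch and the observation); read with $\mathit{step}$ uses index $i=0$ if $(P(ie)=\mathtt{false}\vee P(X)=\mathtt{true})\wedge\beta$ and $i=[\![ie]\!]_\rho$ otherwise; read with $\mathrm{load}$ additionally requires $P(ie)=\mathtt{true}$ and $P(X)=\mathtt{false}$; write with $\mathit{step}$ uses $i=0$ if $(P(ie)=\mathtt{false}\vee P(ae)=\mathtt{false})\wedge\beta$ and $i=[\![ie]\!]_\rho$ otherwise; write with $\mathrm{store}$ additionally requires $P(ie)=\mathtt{true}$ and $P(ae)=\mathtt{true}$. Multi-step $\xrightarrow[D]{O}{}_i^*$ as before. Transformation $\mathrm{FiSLH}_P$: with $m(i)=(\mathtt b==1)\,?\,0:i$ and $B(be)=(\mathtt b==0\ \&\&\ be)$ if $P(be)=\mathtt{false}$, else $be$: $\mathtt{skip}\mapsto\mathtt{skip}$; $X:=e\mapsto X:=e$; $c_1;c_2\mapsto$ translations sequenced; $\mathtt{if}\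 be\ \mathtt{then}\ c_1\ \mathtt{else}\ c_2\mapsto\mathtt{if}\ B(be)\ \mathtt{then}\ (\mathtt b:=B(be)\,?\,\mathtt b:1;[\![c_1]\!])\ \mathtt{else}\ (\mathtt b:=B(be)\,?\,1:\mathtt b;[\![c_2]\!])$; $\mathtt{while}\ be\ \mathtt{do}\ c\mapsto(\mathtt{while}\ B(be)\ \mathtt{do}\ (\mathtt b:=B(be)\,?\,\mathtt b:1;[\![c]\!]));\ \mathtt b:=B(be)\,?\,1:\mathtt b$; $X\leftarrow a[i]\mapsto X\leftarrow a[m(i)]$ if $P(X)=\mathtt{true}$ or $P(i)=\mathtt{false}$, else unchanged; $a[i]\leftarrow e\mapsto a[m(i)]\leftarrow e$ if $P(e)=\mathtt{false}$ or $P(i)=\mathtt{false}$, else unchanged. *)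

theory Defs
  imports Main
begin

type_synonym vname = string
type_synonym aname = string

datatype aexp =
    ANum nat
  | AId vname
  | AOp "nat list \<Rightarrow> nat" "aexp list"
  | ACTIf bexp aexp aexp
and bexp =
    BTrue
  | BFalse
  | BCmp "nat \<Rightarrow> nat \<Rightarrow> bool" aexp aexp
  | BOp "bool list \<Rightarrow> bool" "bexp list"

datatype com =
    Skip
  | Asgn vname aexp
  | Seq com com
  | If bexp com com
  | While bexp com
  | ARead vname aname aexp
  | AWrite aname aexp aexp

type_synonym state = "vname \<Rightarrow> nat"
type_synonym astate = "aname \<Rightarrow> nat list"   (* |a|_mu = length (mu a), mu(a)[i] = mu a ! i *)

fun aeval :: "state \<Rightarrow> aexp \<Rightarrow> nat" and beval :: "state \<Rightarrow> bexp \<Rightarrow> bool" where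
  "aeval \<rho> (ANum n) = n"
| "aeval \<rho> (AId x) = \<rho> x"
| "aeval \<rho> (AOp f es) = f (map (aeval \<rho>) es)"
| "aeval \<rho> (ACTIf be e1 e2) = (if beval \<rho> be then aeval \<rho> e1 else aeval \<rho> e2)"
| "beval \<rho> BTrue = True"
| "beval \<rho> BFalse = False"
| "beval \<rho> (BCmp f e1 e2) = f (aeval \<rho> e1) (aeval \<rho> e2)"
| "beval \<rho> (BOp f bs) = f (map (beval \<rho>) bs)"

fun avars :: "aexp \<Rightarrow> vname set" and bvars :: "bexp \<Rightarrow> vname set" where
  "avars (ANum n) = {}"
| "avars (AId x) = {x}"
| "avars (AOp f es) = (\<Union>e\<in>set es. avars e)"
| "avars (ACTIf be e1 e2) = bvars be \<union> avars e1 \<union> avars e2"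
| "bvars BTrue = {}"
| "bvars BFalse = {}"
| "bvars (BCmp f e1 e2) = avars e1 \<union> avars e2"
| "bvars (BOp f bs) = (\<Union>b\<in>set bs. bvars b)"

fun used_vars :: "com \<Rightarrow> vname set" where
  "used_vars Skip = {}"
| "used_vars (Asgn x e) = {x} \<union> avars e"
| "used_vars (Seq c1 c2) = used_vars c1 \<union> used_vars c2"
| "used_vars (If be c1 c2) = bvars be \<union> used_vars c1 \<union> used_vars c2"
| "used_vars (While be c) = bvars be \<union> used_vars c"
| "used_vars (ARead x a i) = {x} \<union> avars i"
| "used_vars (AWrite a i e) = avars i \<union> avars e"

definition bvar :: vname where "bvar = ''b''"

text \<open>A labeling: True = public, False = secret.\<close>
type_synonym label_map = "vname \<Rightarrow> bool"

definition alabel :: "label_map \<Rightarrow> aexp \<Rightarrow> bool" where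
  "alabel P e = (\<forall>x\<in>avars e. P x)"

definition blabel :: "label_map \<Rightarrow> bexp \<Rightarrow> bool" where
  "blabel P be = (\<forall>x\<in>bvars be. P x)"

datatype obs = OBranch bool | ORead aname nat | OWrite aname nat
datatype dir = DStep | DForce | DLoad aname nat | DStore aname nat

type_synonym config = "com \<times> state \<times> astate \<times> bool"

text \<open>Single steps carry a list of directives / observations of length at most one
  (empty list = no label).\<close>

inductive spec_step :: "config \<Rightarrow> dir list \<Rightarrow> obs list \<Rightarrow> config \<Rightarrow> bool" where
  Spec_Asgn: "spec_step (Asgn x e, \<rho>, \<mu>, \<beta>) [] [] (Skip, \<rho>(x := aeval \<rho> e), \<mu>, \<beta>)"
| Spec_Seq: "spec_step (c1, \<rho>, \<mu>, \<beta>) ds os (c1', \<rho>', \<mu>', \<beta>') \<Longrightarrow>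
    spec_step (Seq c1 c2, \<rho>, \<mu>, \<beta>) ds os (Seq c1' c2, \<rho>', \<mu>', \<beta>')"
| Spec_Seq_Skip: "spec_step (Seq Skip c, \<rho>, \<mu>, \<beta>) [] [] (c, \<rho>, \<mu>, \<beta>)"
| Spec_If: "v = beval \<rho> be \<Longrightarrow>
    spec_step (If be c1 c2, \<rho>, \<mu>, \<beta>) [DStep] [OBranch v] (if v then c1 else c2, \<rho>, \<mu>, \<beta>)"
| Spec_If_F: "v = beval \<rho> be \<Longrightarrow>
    spec_step (If be c1 c2, \<rho>, \<mu>, \<beta>) [DForce] [OBranch v] (if v then c2 else c1, \<rho>, \<mu>, True)"
| Spec_While: "spec_step (While be c, \<rho>, \<mu>, \<beta>) [] []
    (If be (Seq c (While be c)) Skip, \<rho>, \<mu>, \<beta>)"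
| Spec_ARead: "i = aeval \<rho> ie \<Longrightarrow> i < length (\<mu> a) \<Longrightarrow>
    spec_step (ARead x a ie, \<rho>, \<mu>, \<beta>) [DStep] [ORead a i] (Skip, \<rho>(x := \<mu> a ! i), \<mu>, \<beta>)"
| Spec_ARead_U: "i = aeval \<rho> ie \<Longrightarrow> \<beta> = True \<Longrightarrow> i \<ge> length (\<mu> a) \<Longrightarrow> j < length (\<mu> a') \<Longrightarrow>
    spec_step (ARead x a ie, \<rho>, \<mu>, \<beta>) [DLoad a' j] [ORead a i] (Skip, \<rho>(x := \<mu> a' ! j), \<mu>, \<beta>)"
| Spec_AWrite: "i = aeval \<rho> ie \<Longrightarrow> i < length (\<mu> a) \<Longrightarrow>
    spec_step (AWrite a ie e, \<rho>, \<mu>, \<beta>) [DStep] [OWrite a i]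
      (Skip, \<rho>, \<mu>(a := (\<mu> a)[i := aeval \<rho> e]), \<beta>)"
| Spec_AWrite_U: "i = aeval \<rho> ie \<Longrightarrow> \<beta> = True \<Longrightarrow> i \<ge> length (\<mu> a) \<Longrightarrow> j < length (\<mu> a') \<Longrightarrow>
    spec_step (AWrite a ie e, \<rho>, \<mu>, \<beta>) [DStore a' j] [OWrite a i]
      (Skip, \<rho>, \<mu>(a' := (\<mu> a')[j := aeval \<rho> e]), \<beta>)"

inductive spec_multi :: "config \<Rightarrow> dir list \<Rightarrow> obs list \<Rightarrow> config \<Rightarrow> bool" where
  Spec_Refl: "spec_multi cfg [] [] cfg"
| Spec_Trans: "spec_step cfg ds1 os1 cfg' \<Longrightarrow> spec_multi cfg' ds2 os2 cfg'' \<Longrightarrow>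
    spec_multi cfg (ds1 @ ds2) (os1 @ os2) cfg''"

inductive ideal_step :: "label_map \<Rightarrow> config \<Rightarrow> dir list \<Rightarrow> obs list \<Rightarrow> config \<Rightarrow> bool"
  for P :: label_map where
  Ideal_Asgn: "ideal_step P (Asgn x e, \<rho>, \<mu>, \<beta>) [] [] (Skip, \<rho>(x := aeval \<rho> e), \<mu>, \<beta>)"
| Ideal_Seq: "ideal_step P (c1, \<rho>, \<mu>, \<beta>) ds os (c1', \<rho>', \<mu>', \<beta>') \<Longrightarrow>
    ideal_step P (Seq c1 c2, \<rho>, \<mu>, \<beta>) ds os (Seq c1' c2, \<rho>', \<mu>', \<beta>')"
| Ideal_Seq_Skip: "ideal_step P (Seq Skip c, \<rho>, \<mu>, \<beta>) [] [] (c, \<rho>, \<mu>, \<beta>)"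
| Ideal_If: "v = ((blabel P be \<or> \<not> \<beta>) \<and> beval \<rho> be) \<Longrightarrow>
    ideal_step P (If be c1 c2, \<rho>, \<mu>, \<beta>) [DStep] [OBranch v] (if v then c1 else c2, \<rho>, \<mu>, \<beta>)"
| Ideal_If_F: "v = ((blabel P be \<or> \<not> \<beta>) \<and> beval \<rho> be) \<Longrightarrow>
    ideal_step P (If be c1 c2, \<rho>, \<mu>, \<beta>) [DForce] [OBranch v] (if v then c2 else c1, \<rho>, \<mu>, True)"
| Ideal_While: "ideal_step P (While be c, \<rho>, \<mu>, \<beta>) [] []
    (If be (Seq c (While be c)) Skip, \<rho>, \<mu>, \<beta>)"
| Ideal_ARead: "i = (if (\<not> alabel P ie \<or> P x) \<and> \<beta> then 0 else aeval \<rho> ie) \<Longrightarrow>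
    i < length (\<mu> a) \<Longrightarrow>
    ideal_step P (ARead x a ie, \<rho>, \<mu>, \<beta>) [DStep] [ORead a i] (Skip, \<rho>(x := \<mu> a ! i), \<mu>, \<beta>)"
| Ideal_ARead_U: "i = aeval \<rho> ie \<Longrightarrow> \<beta> = True \<Longrightarrow> i \<ge> length (\<mu> a) \<Longrightarrow> j < length (\<mu> a') \<Longrightarrow>
    alabel P ie \<Longrightarrow> \<not> P x \<Longrightarrow>
    ideal_step P (ARead x a ie, \<rho>, \<mu>, \<beta>) [DLoad a' j] [ORead a i] (Skip, \<rho>(x := \<mu> a' ! j), \<mu>, \<beta>)"
| Ideal_AWrite: "i = (if (\<not> alabel P ie \<or> \<not> alabel P e) \<and> \<beta> then 0 else aeval \<rho> ie) \<Longrightarrow>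
    i < length (\<mu> a) \<Longrightarrow>
    ideal_step P (AWrite a ie e, \<rho>, \<mu>, \<beta>) [DStep] [OWrite a i]
      (Skip, \<rho>, \<mu>(a := (\<mu> a)[i := aeval \<rho> e]), \<beta>)"
| Ideal_AWrite_U: "i = aeval \<rho> ie \<Longrightarrow> \<beta> = True \<Longrightarrow> i \<ge> length (\<mu> a) \<Longrightarrow> j < length (\<mu> a') \<Longrightarrow>
    alabel P ie \<Longrightarrow> alabel P e \<Longrightarrow>
    ideal_step P (AWrite a ie e, \<rho>, \<mu>, \<beta>) [DStore a' j] [OWrite a i]
      (Skip, \<rho>, \<mu>(a' := (\<mu> a')[j := aeval \<rho> e]), \<beta>)"

inductive ideal_multi :: "label_map \<Rightarrow> config \<Rightarrow> dir list \<Rightarrow> obs list \<Rightarrow> config \<Rightarrow> bool"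
  for P :: label_map where
  Ideal_Refl: "ideal_multi P cfg [] [] cfg"
| Ideal_Trans: "ideal_step P cfg ds1 os1 cfg' \<Longrightarrow> ideal_multi P cfg' ds2 os2 cfg'' \<Longrightarrow>
    ideal_multi P cfg (ds1 @ ds2) (os1 @ os2) cfg''"

definition BEq :: "aexp \<Rightarrow> aexp \<Rightarrow> bexp" where
  "BEq e1 e2 = BCmp (=) e1 e2"

definition BAnd :: "bexp \<Rightarrow> bexp \<Rightarrow> bexp" where
  "BAnd b1 b2 = BOp (\<lambda>l. l ! 0 \<and> l ! 1) [b1, b2]"

definition mask_idx :: "aexp \<Rightarrow> aexp" where
  "mask_idx i = ACTIf (BEq (AId bvar) (ANum 1)) (ANum 0) i"

definition guard :: "label_map \<Rightarrow> bexp \<Rightarrow> bexp" where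
  "guard P be = (if blabel P be then be else BAnd (BEq (AId bvar) (ANum 0)) be)"

fun fislh :: "label_map \<Rightarrow> com \<Rightarrow> com" where
  "fislh P Skip = Skip"
| "fislh P (Asgn x e) = Asgn x e"
| "fislh P (Seq c1 c2) = Seq (fislh P c1) (fislh P c2)"
| "fislh P (If be c1 c2) =
     If (guard P be)
        (Seq (Asgn bvar (ACTIf (guard P be) (AId bvar) (ANum 1))) (fislh P c1))
        (Seq (Asgn bvar (ACTIf (guard P be) (ANum 1) (AId bvar))) (fislh P c2))"
| "fislh P (While be c) =
     Seq (While (guard P be)
            (Seq (Asgn bvar (ACTIf (guard P be) (AId bvar) (ANum 1))) (fislh P c)))
         (Asgn bvar (ACTIf (guard P be) (ANum 1) (AId bvar)))"
| "fislh P (ARead x a i) =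
     (if P x \<or> \<not> alabel P i then ARead x a (mask_idx i) else ARead x a i)"
| "fislh P (AWrite a i e) =
     (if \<not> alabel P e \<or> \<not> alabel P i then AWrite a (mask_idx i) e else AWrite a i e)"

end

theory Submission
  imports Defs
begin

text \<open>The hardened program is simulated step by step by the source program in the ideal
  semantics, the source state being the hardened one with \<open>b\<close> reset. The invariant is that
  \<open>b = nat \<beta>\<close>, or that an assignment to \<open>b\<close> is pending which will establish it. Every branch
  on a guard \<open>B(be)\<close> begins by updating \<open>b\<close>; since a branch is forced exactly when \<open>B(be)\<close>
  evaluates the other way, this update sets \<open>b\<close> to \<open>1\<close> after a misprediction and keeps it
  otherwise. While the invariant holds, \<open>B(be)\<close> and the masked index \<open>m(i)\<close> evaluate to exactly
  the branch value and index prescribed by the ideal semantics, and an out-of-bounds access can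
  only occur at an unmasked index, where the ideal semantics permits it as well. Steps of the
  flag bookkeeping are matched by stuttering.\<close>

lemma aeval_beval_fun_upd_fresh:
  "x \<notin> avars e \<Longrightarrow> aeval (\<rho>(x := n)) e = aeval \<rho> e"
  "x \<notin> bvars b \<Longrightarrow> beval (\<rho>(x := n)) b = beval \<rho> b"
proof (induction e and b)
  case (AOp f es) then show ?case by (auto intro!: arg_cong[where f=f] map_cong)
next
  case (BOp f bs) then show ?case by (auto intro!: arg_cong[where f=f] map_cong)
qed auto

lemma beval_guard:
  "\<rho> bvar = of_bool \<beta> \<Longrightarrow> beval \<rho> (guard P be) = ((blabel P be \<or> \<not> \<beta>) \<and> beval \<rho> be)"
  by (auto simp: guard_def BAnd_def BEq_def)

lemma aeval_mask_idx:
  "\<rho> bvar = of_bool \<beta> \<Longrightarrow> aeval \<rho> (mask_idx i) = (if \<beta> then 0 else aeval \<rho> i)"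
  by (auto simp: mask_idx_def BEq_def)

lemma fislh_eq_Skip_iff: "fislh P c = Skip \<longleftrightarrow> c = Skip"
  by (cases c) auto

abbreviation then_flag :: "label_map \<Rightarrow> bexp \<Rightarrow> aexp" where
  "then_flag P be \<equiv> ACTIf (guard P be) (AId bvar) (ANum 1)"

abbreviation else_flag :: "label_map \<Rightarrow> bexp \<Rightarrow> aexp" where
  "else_flag P be \<equiv> ACTIf (guard P be) (ANum 1) (AId bvar)"

abbreviation fislh_loop :: "label_map \<Rightarrow> bexp \<Rightarrow> com \<Rightarrow> com" where
  "fislh_loop P be c \<equiv> While (guard P be) (Seq (Asgn bvar (then_flag P be)) (fislh P c))"

definition ideal_step_opt :: "label_map \<Rightarrow> config \<Rightarrow> dir list \<Rightarrow> obs list \<Rightarrow> config \<Rightarrow> bool" where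
  "ideal_step_opt P cfg ds os cfg' \<longleftrightarrow> ideal_step P cfg ds os cfg' \<or> (cfg' = cfg \<and> ds = [] \<and> os = [])"

lemma ideal_step_opt_stutter: "ideal_step_opt P cfg [] [] cfg"
  by (simp add: ideal_step_opt_def)

lemma ideal_step_opt_Seq:
  "ideal_step_opt P (c1, \<rho>, \<mu>, \<beta>) ds os (c1', \<rho>', \<mu>', \<beta>') \<Longrightarrow>
   ideal_step_opt P (Seq c1 c2, \<rho>, \<mu>, \<beta>) ds os (Seq c1' c2, \<rho>', \<mu>', \<beta>')"
  by (auto simp: ideal_step_opt_def intro: Ideal_Seq)

lemma ideal_multi_step_opt:
  "ideal_step_opt P cfg ds1 os1 cfg' \<Longrightarrow> ideal_multi P cfg' ds2 os2 cfg'' \<Longrightarrow>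
   ideal_multi P cfg (ds1 @ ds2) (os1 @ os2) cfg''"
  by (auto simp: ideal_step_opt_def intro: Ideal_Trans)

inductive_cases Spec_SkipE[elim!]: "spec_step (Skip, \<rho>, \<mu>, \<beta>) ds os cfg"
inductive_cases Spec_AsgnE: "spec_step (Asgn x e, \<rho>, \<mu>, \<beta>) ds os cfg"
inductive_cases Spec_SeqE: "spec_step (Seq c1 c2, \<rho>, \<mu>, \<beta>) ds os cfg"
inductive_cases Spec_IfE: "spec_step (If b c1 c2, \<rho>, \<mu>, \<beta>) ds os cfg"
inductive_cases Spec_WhileE: "spec_step (While b c, \<rho>, \<mu>, \<beta>) ds os cfg"
inductive_cases Spec_AReadE: "spec_step (ARead x a i, \<rho>, \<mu>, \<beta>) ds os cfg"
inductive_cases Spec_AWriteE: "spec_step (AWrite a i e, \<rho>, \<mu>, \<beta>) ds os cfg"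

lemma spec_step_Seq_cases:
  assumes "spec_step (Seq c1 c2, \<rho>, \<mu>, \<beta>) ds os (c', \<rho>', \<mu>', \<beta>')"
  obtains (Left) c1' where "c' = Seq c1' c2" "spec_step (c1, \<rho>, \<mu>, \<beta>) ds os (c1', \<rho>', \<mu>', \<beta>')"
    | (Skip_Seq) "c1 = Skip" "ds = []" "os = []" "c' = c2" "\<rho>' = \<rho>" "\<mu>' = \<mu>" "\<beta>' = \<beta>"
  using assms by (auto elim: Spec_SeqE)

lemma spec_step_length:
  "spec_step (c, \<rho>, \<mu>, \<beta>) ds os (c', \<rho>', \<mu>', \<beta>') \<Longrightarrow> length (\<mu>' a) = length (\<mu> a)"
  by (induction "(c, \<rho>, \<mu>, \<beta>)" ds os "(c', \<rho>', \<mu>', \<beta>')"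
      arbitrary: c \<rho> \<mu> \<beta> c' \<rho>' \<mu>' \<beta>' rule: spec_step.induct) auto

lemma spec_step_If_guard:
  assumes step: "spec_step (If (guard P be) T E, \<rho>, \<mu>, \<beta>) ds os (cs', \<rho>', \<mu>', \<beta>')"
    and flag: "\<rho> bvar = of_bool \<beta>" and fresh: "bvar \<notin> bvars be"
  obtains taken where "cs' = (if taken then T else E)" "\<rho>' = \<rho>" "\<mu>' = \<mu>"
    "aeval \<rho> (if taken then then_flag P be else else_flag P be) = of_bool \<beta>'"
    "\<And>c1 c2. ideal_step P (If be c1 c2, \<rho>(bvar := v), \<mu>, \<beta>) ds os
       (if taken then c1 else c2, \<rho>(bvar := v), \<mu>, \<beta>')"
proof -
  define g where "g = beval \<rho> (guard P be)"
  have g_ideal: "g = ((blabel P be \<or> \<not> \<beta>) \<and> beval (\<rho>(bvar := v)) be)"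
    unfolding g_def using beval_guard[of \<rho> \<beta> P be] flag aeval_beval_fun_upd_fresh(2)[OF fresh] by simp
  from step consider
      (Step) "ds = [DStep]" "os = [OBranch g]" "cs' = (if g then T else E)"
        "\<rho>' = \<rho>" "\<mu>' = \<mu>" "\<beta>' = \<beta>"
    | (Force) "ds = [DForce]" "os = [OBranch g]" "cs' = (if \<not> g then T else E)"
        "\<rho>' = \<rho>" "\<mu>' = \<mu>" "\<beta>' = True"
    unfolding g_def by (auto elim!: Spec_IfE)
  then show thesis
  proof cases
    case Step
    have "ideal_step P (If be c1 c2, \<rho>(bvar := v), \<mu>, \<beta>) ds os
        (if g then c1 else c2, \<rho>(bvar := v), \<mu>, \<beta>')" for c1 c2
      unfolding Step by (rule Ideal_If) (simp add: g_ideal)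
    moreover have "aeval \<rho> (if g then then_flag P be else else_flag P be) = of_bool \<beta>'"
      using Step flag by (simp add: g_def)
    ultimately show thesis using Step by (intro that[of g])
  next
    case Force
    have "ideal_step P (If be c2 c1, \<rho>(bvar := v), \<mu>, \<beta>) ds os
        (if g then c1 else c2, \<rho>(bvar := v), \<mu>, \<beta>')" for c1 c2
      unfolding Force by (rule Ideal_If_F) (simp add: g_ideal)
    then have "ideal_step P (If be c1 c2, \<rho>(bvar := v), \<mu>, \<beta>) ds os
        (if \<not> g then c1 else c2, \<rho>(bvar := v), \<mu>, \<beta>')" for c1 c2
      by (cases g) auto
    moreover have "aeval \<rho> (if \<not> g then then_flag P be else else_flag P be) = of_bool \<beta>'"
      using Force by (simp add: g_def)
    ultimately show thesis using Force by (intro that[of "\<not> g"])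
  qed
qed

text \<open>The state argument is that of the hardened program \<open>cs\<close>; the source program \<open>ci\<close> runs
  in it with \<open>b\<close> reset. Sequences enter only through \<open>sim_Seq\<close>, so that rule induction
  provides a hypothesis for their first component.\<close>

inductive fislh_sim :: "label_map \<Rightarrow> com \<Rightarrow> com \<Rightarrow> state \<Rightarrow> bool \<Rightarrow> bool" for P where
  sim_fislh: "\<rho> bvar = of_bool \<beta> \<Longrightarrow> bvar \<notin> used_vars c \<Longrightarrow> \<forall>c1 c2. c \<noteq> Seq c1 c2 \<Longrightarrow>
    fislh_sim P (fislh P c) c \<rho> \<beta>"
| sim_Seq: "fislh_sim P cs ci \<rho> \<beta> \<Longrightarrow> bvar \<notin> used_vars c2 \<Longrightarrow>
    fislh_sim P (Seq cs (fislh P c2)) (Seq ci c2) \<rho> \<beta>"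
| sim_Seq_Skip: "fislh_sim P cs ci \<rho> \<beta> \<Longrightarrow> fislh_sim P (Seq Skip cs) ci \<rho> \<beta>"
| sim_flag_pending: "fislh_sim P cs ci (\<rho>(bvar := aeval \<rho> e)) \<beta> \<Longrightarrow>
    fislh_sim P (Seq (Asgn bvar e) cs) ci \<rho> \<beta>"
| sim_flag_final: "aeval \<rho> e = of_bool \<beta> \<Longrightarrow> fislh_sim P (Asgn bvar e) Skip \<rho> \<beta>"
| sim_loop_test: "\<rho> bvar = of_bool \<beta> \<Longrightarrow> bvar \<notin> used_vars (While be c) \<Longrightarrow>
    fislh_sim P
      (Seq (If (guard P be) (Seq (Seq (Asgn bvar (then_flag P be)) (fislh P c)) (fislh_loop P be c)) Skip)
           (Asgn bvar (else_flag P be)))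
      (If be (Seq c (While be c)) Skip) \<rho> \<beta>"
| sim_loop_body: "fislh_sim P cs ci \<rho> \<beta> \<Longrightarrow> bvar \<notin> used_vars (While be c) \<Longrightarrow>
    fislh_sim P (Seq (Seq cs (fislh_loop P be c)) (Asgn bvar (else_flag P be))) (Seq ci (While be c)) \<rho> \<beta>"

lemma fislh_sim_fislh:
  "bvar \<notin> used_vars c \<Longrightarrow> \<rho> bvar = of_bool \<beta> \<Longrightarrow> fislh_sim P (fislh P c) c \<rho> \<beta>"
proof (induction c)
  case (Seq c1 c2)
  then show ?case using sim_Seq by fastforce
qed (auto intro: sim_fislh simp del: fislh.simps)

lemma fislh_sim_SkipD: "fislh_sim P Skip ci \<rho> \<beta> \<Longrightarrow> ci = Skip \<and> \<rho> bvar = of_bool \<beta>"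
  by (erule fislh_sim.cases) (auto simp: fislh_eq_Skip_iff dest: sym)

lemma fislh_sim_flag_pending_fislh:
  "bvar \<notin> used_vars c \<Longrightarrow> aeval \<rho> e = of_bool \<beta> \<Longrightarrow> fislh_sim P (Seq (Asgn bvar e) (fislh P c)) c \<rho> \<beta>"
  by (rule sim_flag_pending, rule fislh_sim_fislh) auto

lemma fislh_sim_Skip: "\<rho> bvar = of_bool \<beta> \<Longrightarrow> fislh_sim P Skip Skip \<rho> \<beta>"
  using sim_fislh[of \<rho> \<beta> Skip P] by simp

lemma fislh_sim_step_Asgn:
  assumes step: "spec_step (fislh P (Asgn x e), \<rho>, \<mu>, \<beta>) ds os (cs', \<rho>', \<mu>', \<beta>')"
    and flag: "\<rho> bvar = of_bool \<beta>" and fresh: "bvar \<notin> used_vars (Asgn x e)"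
  obtains ci' where "fislh_sim P cs' ci' \<rho>' \<beta>'"
    "ideal_step P (Asgn x e, \<rho>(bvar := v), \<mu>, \<beta>) ds os (ci', \<rho>'(bvar := v), \<mu>', \<beta>')"
proof -
  from fresh have x: "x \<noteq> bvar" and e: "bvar \<notin> avars e" by auto
  from step have post: "cs' = Skip" "\<rho>' = \<rho>(x := aeval \<rho> e)" "\<mu>' = \<mu>" "\<beta>' = \<beta>" "ds = []" "os = []"
    by (auto elim: Spec_AsgnE)
  have "ideal_step P (Asgn x e, \<rho>(bvar := v), \<mu>, \<beta>) [] [] (Skip, \<rho>(x := aeval \<rho> e, bvar := v), \<mu>, \<beta>)"
    using Ideal_Asgn[of P x e "\<rho>(bvar := v)" \<mu> \<beta>] x e
    by (simp add: aeval_beval_fun_upd_fresh fun_upd_twist)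
  moreover have "fislh_sim P Skip Skip (\<rho>(x := aeval \<rho> e)) \<beta>"
    using flag x by (intro fislh_sim_Skip) simp
  ultimately show thesis using that unfolding post by blast
qed

lemma fislh_sim_step_ARead:
  assumes step: "spec_step (fislh P (ARead x a i), \<rho>, \<mu>, \<beta>) ds os (cs', \<rho>', \<mu>', \<beta>')"
    and flag: "\<rho> bvar = of_bool \<beta>" and fresh: "bvar \<notin> used_vars (ARead x a i)"
    and len: "0 < length (\<mu> a)"
  obtains ci' where "fislh_sim P cs' ci' \<rho>' \<beta>'"
    "ideal_step P (ARead x a i, \<rho>(bvar := v), \<mu>, \<beta>) ds os (ci', \<rho>'(bvar := v), \<mu>', \<beta>')"
proof -
  from fresh have x: "x \<noteq> bvar" and i: "bvar \<notin> avars i" by auto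
  define ie where "ie = (if P x \<or> \<not> alabel P i then mask_idx i else i)"
  have idx: "aeval \<rho> ie = (if (\<not> alabel P i \<or> P x) \<and> \<beta> then 0 else aeval (\<rho>(bvar := v)) i)"
    using aeval_mask_idx[of \<rho> \<beta> i] flag i by (auto simp: ie_def aeval_beval_fun_upd_fresh)
  have sim: "fislh_sim P Skip Skip (\<rho>(x := w)) \<beta>" for w
    using flag x by (intro fislh_sim_Skip) simp
  have twist: "\<rho>(x := w, bvar := v) = \<rho>(bvar := v, x := w)" for w
    using x by (rule fun_upd_twist)
  have "fislh P (ARead x a i) = ARead x a ie"
    by (simp add: ie_def)
  from step[unfolded this] consider
      (Step) "ds = [DStep]" "os = [ORead a (aeval \<rho> ie)]" "cs' = Skip" "\<rho>' = \<rho>(x := \<mu> a ! aeval \<rho> ie)"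
        "\<mu>' = \<mu>" "\<beta>' = \<beta>" "aeval \<rho> ie < length (\<mu> a)"
    | (Load) a' j where "ds = [DLoad a' j]" "os = [ORead a (aeval \<rho> ie)]" "cs' = Skip"
        "\<rho>' = \<rho>(x := \<mu> a' ! j)" "\<mu>' = \<mu>" "\<beta>' = \<beta>" "\<beta>" "length (\<mu> a) \<le> aeval \<rho> ie"
        "j < length (\<mu> a')"
    by (auto elim!: Spec_AReadE)
  then show thesis
  proof cases
    case Step
    have "ideal_step P (ARead x a i, \<rho>(bvar := v), \<mu>, \<beta>) ds os (Skip, \<rho>'(bvar := v), \<mu>', \<beta>')"
      unfolding Step twist by (rule Ideal_ARead) (use idx Step in auto)
    then show thesis using that sim Step by blast
  next
    case Load
    text \<open>A masked index is \<open>0\<close> under misspeculation, hence in bounds: only a public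
      index loaded into a secret variable can go out of bounds.\<close>
    with idx len have public: "alabel P i" "\<not> P x"
      by (auto split: if_splits)
    have "ideal_step P (ARead x a i, \<rho>(bvar := v), \<mu>, \<beta>) ds os (Skip, \<rho>'(bvar := v), \<mu>', \<beta>')"
      unfolding Load twist by (rule Ideal_ARead_U) (use idx Load public in auto)
    then show thesis using that sim Load by blast
  qed
qed

lemma fislh_sim_step_AWrite:
  assumes step: "spec_step (fislh P (AWrite a i e), \<rho>, \<mu>, \<beta>) ds os (cs', \<rho>', \<mu>', \<beta>')"
    and flag: "\<rho> bvar = of_bool \<beta>" and fresh: "bvar \<notin> used_vars (AWrite a i e)"
    and len: "0 < length (\<mu> a)"
  obtains ci' where "fislh_sim P cs' ci' \<rho>' \<beta>'"
    "ideal_step P (AWrite a i e, \<rho>(bvar := v), \<mu>, \<beta>) ds os (ci', \<rho>'(bvar := v), \<mu>', \<beta>')"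
proof -
  from fresh have i: "bvar \<notin> avars i" and e: "bvar \<notin> avars e" by auto
  define ie where "ie = (if \<not> alabel P e \<or> \<not> alabel P i then mask_idx i else i)"
  have idx: "aeval \<rho> ie = (if (\<not> alabel P i \<or> \<not> alabel P e) \<and> \<beta> then 0 else aeval (\<rho>(bvar := v)) i)"
    using aeval_mask_idx[of \<rho> \<beta> i] flag i by (auto simp: ie_def aeval_beval_fun_upd_fresh)
  have val: "aeval (\<rho>(bvar := v)) e = aeval \<rho> e"
    using e by (rule aeval_beval_fun_upd_fresh)
  have sim: "fislh_sim P Skip Skip \<rho> \<beta>"
    using flag by (rule fislh_sim_Skip)
  have "fislh P (AWrite a i e) = AWrite a ie e"
    by (simp add: ie_def)
  from step[unfolded this] consider
      (Step) "ds = [DStep]" "os = [OWrite a (aeval \<rho> ie)]" "cs' = Skip" "\<rho>' = \<rho>"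
        "\<mu>' = \<mu>(a := (\<mu> a)[aeval \<rho> ie := aeval \<rho> e])" "\<beta>' = \<beta>" "aeval \<rho> ie < length (\<mu> a)"
    | (Store) a' j where "ds = [DStore a' j]" "os = [OWrite a (aeval \<rho> ie)]" "cs' = Skip" "\<rho>' = \<rho>"
        "\<mu>' = \<mu>(a' := (\<mu> a')[j := aeval \<rho> e])" "\<beta>' = \<beta>" "\<beta>" "length (\<mu> a) \<le> aeval \<rho> ie"
        "j < length (\<mu> a')"
    by (auto elim!: Spec_AWriteE)
  then show thesis
  proof cases
    case Step
    have "ideal_step P (AWrite a i e, \<rho>(bvar := v), \<mu>, \<beta>) ds os (Skip, \<rho>'(bvar := v), \<mu>', \<beta>')"
      unfolding Step val[symmetric] by (rule Ideal_AWrite) (use idx Step in auto)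
    then show thesis using that sim Step by blast
  next
    case Store
    with idx len have public: "alabel P i" "alabel P e"
      by (auto split: if_splits)
    have "ideal_step P (AWrite a i e, \<rho>(bvar := v), \<mu>, \<beta>) ds os (Skip, \<rho>'(bvar := v), \<mu>', \<beta>')"
      unfolding Store val[symmetric] by (rule Ideal_AWrite_U) (use idx Store public in auto)
    then show thesis using that sim Store by blast
  qed
qed

lemma fislh_sim_step_If:
  assumes step: "spec_step (fislh P (If be c1 c2), \<rho>, \<mu>, \<beta>) ds os (cs', \<rho>', \<mu>', \<beta>')"
    and flag: "\<rho> bvar = of_bool \<beta>" and fresh: "bvar \<notin> used_vars (If be c1 c2)"
  obtains ci' where "fislh_sim P cs' ci' \<rho>' \<beta>'"
    "ideal_step P (If be c1 c2, \<rho>(bvar := v), \<mu>, \<beta>) ds os (ci', \<rho>'(bvar := v), \<mu>', \<beta>')"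
proof -
  from fresh have be: "bvar \<notin> bvars be" by simp
  from step have "spec_step (If (guard P be) (Seq (Asgn bvar (then_flag P be)) (fislh P c1))
      (Seq (Asgn bvar (else_flag P be)) (fislh P c2)), \<rho>, \<mu>, \<beta>) ds os (cs', \<rho>', \<mu>', \<beta>')"
    (is "spec_step (If _ ?T ?E, _) _ _ _")
    by simp
  then obtain taken where post: "cs' = (if taken then Seq (Asgn bvar (then_flag P be)) (fislh P c1)
      else Seq (Asgn bvar (else_flag P be)) (fislh P c2))" "\<rho>' = \<rho>" "\<mu>' = \<mu>"
    and restored: "aeval \<rho> (if taken then then_flag P be else else_flag P be) = of_bool \<beta>'"
    and ideal: "ideal_step P (If be c1 c2, \<rho>(bvar := v), \<mu>, \<beta>) ds os
      (if taken then c1 else c2, \<rho>(bvar := v), \<mu>, \<beta>')"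
    using spec_step_If_guard[where \<rho> = \<rho>, OF _ flag be] by blast
  have "fislh_sim P cs' (if taken then c1 else c2) \<rho>' \<beta>'"
    using fresh restored by (cases taken) (auto simp: post intro: fislh_sim_flag_pending_fislh)
  then show thesis using that ideal post by blast
qed

lemma fislh_sim_step_While:
  assumes step: "spec_step (fislh P (While be c), \<rho>, \<mu>, \<beta>) ds os (cs', \<rho>', \<mu>', \<beta>')"
    and flag: "\<rho> bvar = of_bool \<beta>" and fresh: "bvar \<notin> used_vars (While be c)"
  obtains ci' where "fislh_sim P cs' ci' \<rho>' \<beta>'"
    "ideal_step P (While be c, \<rho>(bvar := v), \<mu>, \<beta>) ds os (ci', \<rho>'(bvar := v), \<mu>', \<beta>')"
proof -
  from step have post: "ds = []" "os = []" "\<rho>' = \<rho>" "\<mu>' = \<mu>" "\<beta>' = \<beta>"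
    "cs' = Seq (If (guard P be) (Seq (Seq (Asgn bvar (then_flag P be)) (fislh P c)) (fislh_loop P be c)) Skip)
       (Asgn bvar (else_flag P be))"
    by (auto elim!: Spec_SeqE Spec_WhileE)
  have "fislh_sim P cs' (If be (Seq c (While be c)) Skip) \<rho>' \<beta>'"
    unfolding post using flag fresh by (rule sim_loop_test)
  moreover have "ideal_step P (While be c, \<rho>(bvar := v), \<mu>, \<beta>) ds os
      (If be (Seq c (While be c)) Skip, \<rho>'(bvar := v), \<mu>', \<beta>')"
    unfolding post by (rule Ideal_While)
  ultimately show thesis by (rule that)
qed

lemma fislh_sim_step_loop_test:
  assumes step: "spec_step
      (Seq (If (guard P be) (Seq (Seq (Asgn bvar (then_flag P be)) (fislh P c)) (fislh_loop P be c)) Skip)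
           (Asgn bvar (else_flag P be)), \<rho>, \<mu>, \<beta>) ds os (cs', \<rho>', \<mu>', \<beta>')"
    and flag: "\<rho> bvar = of_bool \<beta>" and fresh: "bvar \<notin> used_vars (While be c)"
  obtains ci' where "fislh_sim P cs' ci' \<rho>' \<beta>'"
    "ideal_step P (If be (Seq c (While be c)) Skip, \<rho>(bvar := v), \<mu>, \<beta>) ds os
       (ci', \<rho>'(bvar := v), \<mu>', \<beta>')"
proof -
  from fresh have be: "bvar \<notin> bvars be" by simp
  from step obtain cs1 where cs': "cs' = Seq cs1 (Asgn bvar (else_flag P be))"
    and test: "spec_step (If (guard P be) (Seq (Seq (Asgn bvar (then_flag P be)) (fislh P c))
      (fislh_loop P be c)) Skip, \<rho>, \<mu>, \<beta>) ds os (cs1, \<rho>', \<mu>', \<beta>')"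
    by (auto elim: Spec_SeqE)
  from test obtain taken where post: "cs1 = (if taken
        then Seq (Seq (Asgn bvar (then_flag P be)) (fislh P c)) (fislh_loop P be c) else Skip)"
      "\<rho>' = \<rho>" "\<mu>' = \<mu>"
    and restored: "aeval \<rho> (if taken then then_flag P be else else_flag P be) = of_bool \<beta>'"
    and ideal: "ideal_step P (If be (Seq c (While be c)) Skip, \<rho>(bvar := v), \<mu>, \<beta>) ds os
      (if taken then Seq c (While be c) else Skip, \<rho>(bvar := v), \<mu>, \<beta>')"
    using spec_step_If_guard[where \<rho> = \<rho>, OF _ flag be] by blast
  have "fislh_sim P cs' (if taken then Seq c (While be c) else Skip) \<rho>' \<beta>'"
  proof (cases taken)
    case True
    have "fislh_sim P (Seq (Asgn bvar (then_flag P be)) (fislh P c)) c \<rho>' \<beta>'"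
      using fresh restored True post by (intro fislh_sim_flag_pending_fislh) auto
    then show ?thesis
      unfolding cs' post(1) if_P[OF True] using fresh by (rule sim_loop_body)
  next
    case False
    then show ?thesis
      using restored by (auto simp: cs' post intro!: sim_Seq_Skip sim_flag_final)
  qed
  then show thesis using that ideal post by blast
qed

lemma fislh_sim_step_fislh:
  assumes step: "spec_step (fislh P c, \<rho>, \<mu>, \<beta>) ds os (cs', \<rho>', \<mu>', \<beta>')"
    and flag: "\<rho> bvar = of_bool \<beta>" and fresh: "bvar \<notin> used_vars c"
    and not_Seq: "\<forall>c1 c2. c \<noteq> Seq c1 c2" and len: "\<forall>a. 0 < length (\<mu> a)"
  obtains ci' where "fislh_sim P cs' ci' \<rho>' \<beta>'"
    "ideal_step P (c, \<rho>(bvar := v), \<mu>, \<beta>) ds os (ci', \<rho>'(bvar := v), \<mu>', \<beta>')"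
proof (cases c)
  case Skip
  with step show thesis by auto
next
  case Seq
  with not_Seq show thesis by simp
next
  case Asgn
  from step flag fresh show thesis
    unfolding Asgn by (rule fislh_sim_step_Asgn) (rule that[unfolded Asgn])
next
  case If
  from step flag fresh show thesis
    unfolding If by (rule fislh_sim_step_If) (rule that[unfolded If])
next
  case While
  from step flag fresh show thesis
    unfolding While by (rule fislh_sim_step_While) (rule that[unfolded While])
next
  case (ARead x a i)
  from step flag fresh len[rule_format, of a] show thesis
    unfolding ARead by (rule fislh_sim_step_ARead) (rule that[unfolded ARead])
next
  case (AWrite a i e)
  from step flag fresh len[rule_format, of a] show thesis
    unfolding AWrite by (rule fislh_sim_step_AWrite) (rule that[unfolded AWrite])
qed

lemma fislh_sim_step:
  assumes "fislh_sim P cs ci \<rho> \<beta>" "spec_step (cs, \<rho>, \<mu>, \<beta>) ds os (cs', \<rho>', \<mu>', \<beta>')"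
    "\<forall>a. 0 < length (\<mu> a)"
  shows "\<exists>ci'. fislh_sim P cs' ci' \<rho>' \<beta>' \<and>
    ideal_step_opt P (ci, \<rho>(bvar := v), \<mu>, \<beta>) ds os (ci', \<rho>'(bvar := v), \<mu>', \<beta>')"
  using assms
proof (induction arbitrary: ds os cs' \<rho>' \<mu>' \<beta>' rule: fislh_sim.induct)
  case (sim_fislh \<rho> \<beta> c)
  then show ?case
    unfolding ideal_step_opt_def by (elim fislh_sim_step_fislh[where v = v]) blast+
next
  case (sim_Seq cs ci \<rho> \<beta> c2)
  from sim_Seq.prems(1) show ?case
  proof (cases rule: spec_step_Seq_cases)
    case (Left cs1)
    with sim_Seq.IH sim_Seq.prems(2) sim_Seq.hyps(2) show ?thesis
      by (blast intro: fislh_sim.sim_Seq ideal_step_opt_Seq)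
  next
    case Skip_Seq
    with sim_Seq.hyps have "ci = Skip" "\<rho> bvar = of_bool \<beta>"
      by (auto dest: fislh_sim_SkipD)
    with Skip_Seq sim_Seq.hyps(2) show ?thesis
      by (auto simp: ideal_step_opt_def intro: Ideal_Seq_Skip fislh_sim_fislh)
  qed
next
  case (sim_Seq_Skip cs ci \<rho> \<beta>)
  then show ?case
    by (auto elim!: Spec_SeqE intro: ideal_step_opt_stutter)
next
  case (sim_flag_pending cs ci \<rho> e \<beta>)
  from sim_flag_pending.prems(1) have post: "cs' = Seq Skip cs" "\<rho>' = \<rho>(bvar := aeval \<rho> e)"
    "\<mu>' = \<mu>" "\<beta>' = \<beta>" "ds = []" "os = []"
    by (auto elim!: Spec_SeqE Spec_AsgnE)
  have "fislh_sim P cs' ci \<rho>' \<beta>'"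
    unfolding post using sim_flag_pending.hyps by (rule fislh_sim.sim_Seq_Skip)
  moreover have "ideal_step_opt P (ci, \<rho>(bvar := v), \<mu>, \<beta>) ds os (ci, \<rho>'(bvar := v), \<mu>', \<beta>')"
    using ideal_step_opt_stutter by (simp add: post)
  ultimately show ?case by blast
next
  case (sim_flag_final \<rho> e \<beta>)
  from sim_flag_final.prems(1) have post: "cs' = Skip" "\<rho>' = \<rho>(bvar := aeval \<rho> e)"
    "\<mu>' = \<mu>" "\<beta>' = \<beta>" "ds = []" "os = []"
    by (auto elim!: Spec_AsgnE)
  have "fislh_sim P cs' Skip \<rho>' \<beta>'"
    unfolding post using sim_flag_final.hyps by (intro fislh_sim_Skip) simp
  moreover have "ideal_step_opt P (Skip, \<rho>(bvar := v), \<mu>, \<beta>) ds os (Skip, \<rho>'(bvar := v), \<mu>', \<beta>')"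
    using ideal_step_opt_stutter by (simp add: post)
  ultimately show ?case by blast
next
  case (sim_loop_test \<rho> \<beta> be c)
  then show ?case
    unfolding ideal_step_opt_def by (elim fislh_sim_step_loop_test[where v = v]) blast+
next
  case (sim_loop_body cs ci \<rho> \<beta> be c)
  from sim_loop_body.prems(1) show ?case
  proof (cases rule: spec_step_Seq_cases)
    case (Left cs1)
    from Left(2) show ?thesis
    proof (cases rule: spec_step_Seq_cases)
      case (Left cs2)
      with sim_loop_body.IH sim_loop_body.prems(2) sim_loop_body.hyps(2) \<open>cs' = Seq cs1 _\<close>
      show ?thesis
        by (blast intro: fislh_sim.sim_loop_body ideal_step_opt_Seq)
    next
      case Skip_Seq
      with sim_loop_body.hyps have "ci = Skip" "\<rho> bvar = of_bool \<beta>"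
        by (auto dest: fislh_sim_SkipD)
      with Skip_Seq sim_loop_body.hyps(2) \<open>cs' = Seq cs1 _\<close> show ?thesis
        using fislh_sim_fislh[of "While be c" \<rho> \<beta> P]
        by (auto simp: ideal_step_opt_def intro: Ideal_Seq_Skip)
    qed
  qed simp
qed

lemma fislh_sim_multi:
  assumes "spec_multi (cs, \<rho>, \<mu>, \<beta>) ds os (cs', \<rho>', \<mu>', \<beta>')" "fislh_sim P cs ci \<rho> \<beta>"
    "\<forall>a. 0 < length (\<mu> a)"
  shows "\<exists>ci'. ideal_multi P (ci, \<rho>(bvar := v), \<mu>, \<beta>) ds os (ci', \<rho>'(bvar := v), \<mu>', \<beta>')
    \<and> fislh_sim P cs' ci' \<rho>' \<beta>'"
  using assms
proof (induction "(cs, \<rho>, \<mu>, \<beta>)" ds os "(cs', \<rho>', \<mu>', \<beta>')"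
    arbitrary: cs \<rho> \<mu> \<beta> ci rule: spec_multi.induct)
  case Spec_Refl
  then show ?case by (auto intro: Ideal_Refl)
next
  case (Spec_Trans ds1 os1 cfg1 ds2 os2)
  obtain cs1 \<rho>1 \<mu>1 \<beta>1 where cfg1: "cfg1 = (cs1, \<rho>1, \<mu>1, \<beta>1)"
    by (cases cfg1)
  with Spec_Trans.hyps(1) Spec_Trans.prems obtain ci1 where
    sim1: "fislh_sim P cs1 ci1 \<rho>1 \<beta>1" and
    step1: "ideal_step_opt P (ci, \<rho>(bvar := v), \<mu>, \<beta>) ds1 os1 (ci1, \<rho>1(bvar := v), \<mu>1, \<beta>1)"
    using fislh_sim_step by blast
  have "\<forall>a. 0 < length (\<mu>1 a)"
    using Spec_Trans.hyps(1) Spec_Trans.prems(2) spec_step_length unfolding cfg1 by metis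
  with Spec_Trans.hyps(3) sim1 cfg1 obtain ci' where
    "ideal_multi P (ci1, \<rho>1(bvar := v), \<mu>1, \<beta>1) ds2 os2 (ci', \<rho>'(bvar := v), \<mu>', \<beta>')"
    "fislh_sim P cs' ci' \<rho>' \<beta>'"
    by blast
  with step1 show ?case
    by (blast intro: ideal_multi_step_opt)
qed

theorem lemma5p1:
  fixes P :: label_map and c c' :: com and \<rho> \<rho>' :: state and \<mu> \<mu>' :: astate
    and \<beta> \<beta>' :: bool and ds :: "dir list" and os :: "obs list"
  assumes "\<forall>a. 0 < length (\<mu> a)"
    and "bvar \<notin> used_vars c"
    and "\<rho> bvar = of_bool \<beta>"
    and "spec_multi (fislh P c, \<rho>, \<mu>, \<beta>) ds os (c', \<rho>', \<mu>', \<beta>')"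
  shows "\<exists>c''. ideal_multi P (c, \<rho>, \<mu>, \<beta>) ds os (c'', \<rho>'(bvar := \<rho> bvar), \<mu>', \<beta>')
           \<and> (c' = Skip \<longrightarrow> c'' = Skip \<and> \<rho>' bvar = of_bool \<beta>')"
proof -
  have "fislh_sim P (fislh P c) c \<rho> \<beta>"
    using assms(2,3) by (rule fislh_sim_fislh)
  with assms(4,1) obtain c'' where
    "ideal_multi P (c, \<rho>(bvar := \<rho> bvar), \<mu>, \<beta>) ds os (c'', \<rho>'(bvar := \<rho> bvar), \<mu>', \<beta>')"
    and "fislh_sim P c' c'' \<rho>' \<beta>'"
    using fislh_sim_multi by blast
  moreover from this(2) have "c' = Skip \<longrightarrow> c'' = Skip \<and> \<rho>' bvar = of_bool \<beta>'"
    using fislh_sim_SkipD by blast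
  ultimately show ?thesis
    by auto
qed

end
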